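(* Let $p$ be a prime, and let $G$ and $A$ be finite abelian $p$-groups (written additively). For a $2$-cocycle $\alpha\colon G\times G\to A$ let $E(\alpha)$ be the group with underlying set $A\times G$ and multiplication $(a_1,g_1)(a_2,g_2)=(a_1+a_2+\alpha(g_1,g_2),g_1+g_2)$, and put $\eta^\alpha(g_1,g_2)=\alpha(g_1,g_2)-\alpha(g_2,g_1)$. Let $\alpha,\alpha'$ be $2$-cocycles such that the image of $\eta^\alpha$ generates $A$ and the image of $\eta^{\alpha'}$ generates $A$ (equivalently $[E(\alpha),E(\alpha)]=[E(\alpha'),E(\alpha')]=A$). An endomorphism $\varphi\in\mathrm{End}(G)$ can be lifted to a homomorphism $\phi\colon E(\alpha)\to E(\alpha')$ (i.e. a homomorphism with $\phi(a,g)\in A\times\{\varphi(g)\}$ for all $(a,g)$) if and only if there exists $\psi\in\mathrm{End}(A)$ such that $$\psi(\eta^{\alpha}(g_1,g_2))=\eta^{\alpha'}(\varphi(g_1),\varphi(g_2))\quad\text{for all } g_1,g_2\in G,\qquad \varphi^\ast([\alpha'])=\psi_\ast([\alpha])\ \text{in } H^2(G;A).$$ When these hold, each such lift $\phi$ is given by $\phi(a,g)=(\psi(a)+\mu(g),\varphi(g))$ for a unique function $\mu\colon G\to A$ satisfying $\delta\mu=\psi_\ast(\alpha)-\varphi^\ast(\alpha')$, where $(\delta\mu)(g_1,g_2)=\mu(g_1)+\mu(g_2)-\mu(g_1+g_2)$. In particular, an automorphism $\varphi\in\mathrm{Aut}(G)$ can be lifted to an isomorphism $E(\alpha)\to E(\alpha')$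 if and only if there exists $\psi\in\mathrm{Aut}(A)$ such that $\psi(\eta^{\alpha}(g_1,g_2))=\eta^{\alpha'}(\varphi(g_1),\varphi(g_2))$ for all $g_1,g_2\in G$ and $\varphi^\ast([\alpha'])=\psi_\ast([\alpha])$.
   Context: A $2$-cocycle is a function $\alpha\colon G\times G\to A$ with $\alpha(g_1,g_2)-\alpha(g_1,g_2+g_3)+\alpha(g_1+g_2,g_3)-\alpha(g_2,g_3)=0$ for all $g_i\in G$. For $\varphi\in\mathrm{End}(G)$ and $\psi\in\mathrm{End}(A)$, $(\varphi^\ast\alpha)(g_1,g_2)=\alpha(\varphi(g_1),\varphi(g_2))$ and $(\psi_\ast\alpha)(g_1,g_2)=\psi(\alpha(g_1,g_2))$; these induce the maps $\varphi^\ast,\psi_\ast$ on $H^2(G;A)$. *)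

theory Defs
  imports Main "HOL-Computational_Algebra.Primes"
begin

definition add_hom :: "('a::ab_group_add \<Rightarrow> 'b::ab_group_add) \<Rightarrow> bool" where
  "add_hom f \<longleftrightarrow> (\<forall>x y. f (x + y) = f x + f y)"

definition is_p_group :: "nat \<Rightarrow> 'a::ab_group_add set \<Rightarrow> bool" where
  "is_p_group p S \<longleftrightarrow> finite S \<and> (\<exists>k. card S = p ^ k)"

definition add_subgroup :: "'a::ab_group_add set \<Rightarrow> bool" where
  "add_subgroup H \<longleftrightarrow> 0 \<in> H \<and> (\<forall>x\<in>H. \<forall>y\<in>H. x + y \<in> H) \<and> (\<forall>x\<in>H. - x \<in> H)"

definition gen_subgroup :: "'a::ab_group_add set \<Rightarrow> 'a set" where
  "gen_subgroup S = \<Inter>{H. add_subgroup H \<and> S \<subseteq> H}"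

definition cocycle :: "('g::ab_group_add \<Rightarrow> 'g \<Rightarrow> 'a::ab_group_add) \<Rightarrow> bool" where
  "cocycle \<alpha> \<longleftrightarrow> (\<forall>g1 g2 g3.
     \<alpha> g1 g2 - \<alpha> g1 (g2 + g3) + \<alpha> (g1 + g2) g3 - \<alpha> g2 g3 = 0)"

definition emul :: "('g::ab_group_add \<Rightarrow> 'g \<Rightarrow> 'a::ab_group_add) \<Rightarrow> 'a \<times> 'g \<Rightarrow> 'a \<times> 'g \<Rightarrow> 'a \<times> 'g" where
  "emul \<alpha> x y = (fst x + fst y + \<alpha> (snd x) (snd y), snd x + snd y)"

definition eta :: "('g \<Rightarrow> 'g \<Rightarrow> 'a::ab_group_add) \<Rightarrow> 'g \<Rightarrow> 'g \<Rightarrow> 'a" where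
  "eta \<alpha> g1 g2 = \<alpha> g1 g2 - \<alpha> g2 g1"

definition coboundary :: "('g::ab_group_add \<Rightarrow> 'a::ab_group_add) \<Rightarrow> 'g \<Rightarrow> 'g \<Rightarrow> 'a" where
  "coboundary \<mu> g1 g2 = \<mu> g1 + \<mu> g2 - \<mu> (g1 + g2)"

definition pullback :: "('g \<Rightarrow> 'g) \<Rightarrow> ('g \<Rightarrow> 'g \<Rightarrow> 'a) \<Rightarrow> 'g \<Rightarrow> 'g \<Rightarrow> 'a" where
  "pullback \<phi> \<alpha> g1 g2 = \<alpha> (\<phi> g1) (\<phi> g2)"

definition pushforward :: "('a \<Rightarrow> 'a) \<Rightarrow> ('g \<Rightarrow> 'g \<Rightarrow> 'a) \<Rightarrow> 'g \<Rightarrow> 'g \<Rightarrow> 'a" where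
  "pushforward \<psi> \<alpha> g1 g2 = \<psi> (\<alpha> g1 g2)"

definition cohomologous :: "('g::ab_group_add \<Rightarrow> 'g \<Rightarrow> 'a::ab_group_add) \<Rightarrow> ('g \<Rightarrow> 'g \<Rightarrow> 'a) \<Rightarrow> bool" where
  "cohomologous \<alpha> \<beta> \<longleftrightarrow> (\<exists>\<mu>. \<forall>g1 g2. \<alpha> g1 g2 - \<beta> g1 g2 = coboundary \<mu> g1 g2)"

definition ext_hom :: "('g::ab_group_add \<Rightarrow> 'g \<Rightarrow> 'a::ab_group_add) \<Rightarrow> ('g \<Rightarrow> 'g \<Rightarrow> 'a) \<Rightarrow> ('a \<times> 'g \<Rightarrow> 'a \<times> 'g) \<Rightarrow> bool" where
  "ext_hom \<alpha> \<alpha>' \<Phi> \<longleftrightarrow> (\<forall>x y. \<Phi> (emul \<alpha> x y) = emul \<alpha>' (\<Phi> x) (\<Phi> y))"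

definition is_lift :: "('g \<Rightarrow> 'g) \<Rightarrow> ('a \<times> 'g \<Rightarrow> 'a \<times> 'g) \<Rightarrow> bool" where
  "is_lift \<phi> \<Phi> \<longleftrightarrow> (\<forall>a g. snd (\<Phi> (a, g)) = \<phi> g)"

end

theory Submission
  imports Defs
begin

(* Multiplying by elements of A x 0, on which the cocycles are constant, the homomorphism
   condition makes a lift affine: Phi(a,g) = (psi a + mu g, phi g) with psi additive.  For general
   factors it then says exactly that the coboundary of mu is psi_*(alpha) - phi^*(alpha'), and
   conversely every such pair (psi, mu) defines a lift.  Coboundaries are symmetric, so
   antisymmetrising this equation gives psi o eta^alpha = eta^alpha' o (phi x phi); as eta^alpha
   generates A, psi is determined by phi. *)

lemma add_hom_zero: "add_hom f \<Longrightarrow> f 0 = 0"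
  unfolding add_hom_def by (metis add_cancel_right_right add_0)

lemma add_hom_diff: "add_hom f \<Longrightarrow> f (x - y) = f x - f y"
  unfolding add_hom_def by (metis add_diff_cancel diff_add_cancel)

lemma add_hom_shifted:
  fixes h :: "'a::ab_group_add \<Rightarrow> 'b::ab_group_add"
  assumes "\<And>x y. h (x + y + c) = h x + h y + d"
  shows "add_hom (\<lambda>x. h (x - c) + d)"
  unfolding add_hom_def
proof (intro allI)
  fix x y
  have "h ((x - c) + (y - c) + c) = h (x - c) + h (y - c) + d" by (rule assms)
  then show "h (x + y - c) + d = (h (x - c) + d) + (h (y - c) + d)"
    by (simp add: algebra_simps)
qed

lemma gen_subgroup_least: "add_subgroup H \<Longrightarrow> S \<subseteq> H \<Longrightarrow> gen_subgroup S \<subseteq> H"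
  unfolding gen_subgroup_def by blast

lemma add_subgroup_equalizer:
  "add_hom f \<Longrightarrow> add_hom g \<Longrightarrow> add_subgroup {x. f x = g x}"
  unfolding add_subgroup_def
  by (auto simp: add_hom_zero add_hom_def add_hom_diff[of _ 0, simplified])

lemma add_hom_eqI_generators:
  assumes "add_hom f" "add_hom g" "gen_subgroup S = UNIV" "\<And>s. s \<in> S \<Longrightarrow> f s = g s"
  shows "f = g"
proof -
  have "gen_subgroup S \<subseteq> {x. f x = g x}"
    using gen_subgroup_least[OF add_subgroup_equalizer[OF assms(1,2)]] assms(4) by blast
  then show ?thesis using assms(3) by auto
qed

lemma cocycle_zero_left:
  assumes "cocycle \<alpha>"
  shows "\<alpha> 0 g = \<alpha> 0 0"
proof -
  have "\<alpha> 0 0 - \<alpha> 0 (0 + g) + \<alpha> (0 + 0) g - \<alpha> 0 g = 0"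
    using assms unfolding cocycle_def by blast
  then show ?thesis by (simp add: algebra_simps)
qed

lemma coboundary_commute: "coboundary \<mu> g1 g2 = coboundary \<mu> g2 g1"
  unfolding coboundary_def by (simp add: add.commute)

lemma coboundary_uminus: "coboundary (\<lambda>g. - \<mu> g) g1 g2 = - coboundary \<mu> g1 g2"
  unfolding coboundary_def by (simp add: algebra_simps)

lemma cohomologous_iff_coboundary_diff:
  "cohomologous \<beta> \<gamma> \<longleftrightarrow> (\<exists>\<mu>. \<forall>g1 g2. coboundary \<mu> g1 g2 = \<gamma> g1 g2 - \<beta> g1 g2)"
proof
  assume "cohomologous \<beta> \<gamma>"
  then obtain \<mu> where "\<And>g1 g2. \<beta> g1 g2 - \<gamma> g1 g2 = coboundary \<mu> g1 g2"
    unfolding cohomologous_def by blast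
  then have "\<forall>g1 g2. coboundary (\<lambda>g. - \<mu> g) g1 g2 = \<gamma> g1 g2 - \<beta> g1 g2"
    by (metis coboundary_uminus minus_diff_eq)
  then show "\<exists>\<mu>. \<forall>g1 g2. coboundary \<mu> g1 g2 = \<gamma> g1 g2 - \<beta> g1 g2" by blast
next
  assume "\<exists>\<mu>. \<forall>g1 g2. coboundary \<mu> g1 g2 = \<gamma> g1 g2 - \<beta> g1 g2"
  then obtain \<mu> where "\<And>g1 g2. coboundary \<mu> g1 g2 = \<gamma> g1 g2 - \<beta> g1 g2" by blast
  then have "\<forall>g1 g2. \<beta> g1 g2 - \<gamma> g1 g2 = coboundary (\<lambda>g. - \<mu> g) g1 g2"
    by (metis coboundary_uminus minus_diff_eq)
  then show "cohomologous \<beta> \<gamma>" unfolding cohomologous_def by blast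
qed

lemma eta_compatible_if_coboundary:
  assumes "add_hom \<psi>"
    and "\<And>g1 g2. coboundary \<mu> g1 g2 = pushforward \<psi> \<alpha> g1 g2 - pullback \<phi> \<alpha>' g1 g2"
  shows "\<psi> (eta \<alpha> g1 g2) = eta \<alpha>' (\<phi> g1) (\<phi> g2)"
proof -
  have "\<psi> (\<alpha> g1 g2) - \<alpha>' (\<phi> g1) (\<phi> g2) = \<psi> (\<alpha> g2 g1) - \<alpha>' (\<phi> g2) (\<phi> g1)"
    using assms(2)[of g1 g2] assms(2)[of g2 g1] coboundary_commute[of \<mu> g1 g2]
    unfolding pushforward_def pullback_def by metis
  then show ?thesis
    unfolding eta_def add_hom_diff[OF assms(1)] by (simp add: algebra_simps)
qed

lemma ext_hom_lift_fst:
  assumes "ext_hom \<alpha> \<alpha>' \<Phi>" "is_lift \<phi> \<Phi>"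
  shows "fst (\<Phi> (a1 + a2 + \<alpha> g1 g2, g1 + g2))
    = fst (\<Phi> (a1, g1)) + fst (\<Phi> (a2, g2)) + \<alpha>' (\<phi> g1) (\<phi> g2)"
proof -
  have "\<Phi> (emul \<alpha> (a1, g1) (a2, g2)) = emul \<alpha>' (\<Phi> (a1, g1)) (\<Phi> (a2, g2))"
    using assms(1) unfolding ext_hom_def by blast
  then show ?thesis using assms(2) unfolding emul_def is_lift_def by simp
qed

lemma ext_hom_lift_base_add_hom:
  assumes "ext_hom \<alpha> \<alpha>' \<Phi>" "is_lift \<phi> \<Phi>"
  shows "add_hom \<phi>"
  unfolding add_hom_def
proof (intro allI)
  fix g1 g2
  have "\<Phi> (emul \<alpha> (0, g1) (0, g2)) = emul \<alpha>' (\<Phi> (0, g1)) (\<Phi> (0, g2))"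
    using assms(1) unfolding ext_hom_def by blast
  then have "snd (\<Phi> (emul \<alpha> (0, g1) (0, g2))) = snd (emul \<alpha>' (\<Phi> (0, g1)) (\<Phi> (0, g2)))"
    by simp
  then show "\<phi> (g1 + g2) = \<phi> g1 + \<phi> g2"
    using assms(2) unfolding emul_def is_lift_def by simp
qed

lemma ext_hom_lift_affine_form:
  fixes \<alpha> \<alpha>' :: "'g::ab_group_add \<Rightarrow> 'g \<Rightarrow> 'a::ab_group_add"
  assumes "cocycle \<alpha>" "cocycle \<alpha>'" "ext_hom \<alpha> \<alpha>' \<Phi>" "is_lift \<phi> \<Phi>"
  shows "\<exists>\<psi> \<mu>. add_hom \<psi> \<and> (\<forall>a g. \<Phi> (a, g) = (\<psi> a + \<mu> g, \<phi> g)) \<and>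
    (\<forall>g1 g2. coboundary \<mu> g1 g2 = pushforward \<psi> \<alpha> g1 g2 - pullback \<phi> \<alpha>' g1 g2)"
proof -
  define F where "F x = fst (\<Phi> x)" for x
  define \<mu> where "\<mu> g = F (0, g)" for g
  define c c' where "c = \<alpha> 0 0" and "c' = \<alpha>' 0 0"
  \<comment> \<open>as \<open>(a - c, 0) * (0, g) = (a, g)\<close> in \<open>E(\<alpha>)\<close>, the first component of \<open>\<Phi> (a, g)\<close> is \<open>\<psi> a + \<mu> g\<close>\<close>
  define \<psi> where "\<psi> a = F (a - c, 0) + c'" for a
  have hom: "F (a1 + a2 + \<alpha> g1 g2, g1 + g2) = F (a1, g1) + F (a2, g2) + \<alpha>' (\<phi> g1) (\<phi> g2)"
    for a1 a2 g1 g2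
    unfolding F_def by (rule ext_hom_lift_fst[OF assms(3,4)])
  have "\<phi> 0 = 0"
    using add_hom_zero ext_hom_lift_base_add_hom[OF assms(3,4)] by blast
  then have const: "\<alpha> 0 g = c" "\<alpha>' (\<phi> 0) h = c'" for g h
    using cocycle_zero_left[OF assms(1)] cocycle_zero_left[OF assms(2)] unfolding c_def c'_def by auto
  have "add_hom \<psi>"
    unfolding \<psi>_def using hom[of _ _ 0 0] const
    by (intro add_hom_shifted[where h = "\<lambda>a. F (a, 0)"]) simp
  moreover have split: "F (a, g) = \<psi> a + \<mu> g" for a g
    using hom[of "a - c" 0 0 g] const unfolding \<psi>_def \<mu>_def by simp
  moreover have "\<Phi> (a, g) = (\<psi> a + \<mu> g, \<phi> g)" for a g
    using split[of a g] assms(4) unfolding F_def is_lift_def by (metis prod.collapse)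
  moreover have "coboundary \<mu> g1 g2 = pushforward \<psi> \<alpha> g1 g2 - pullback \<phi> \<alpha>' g1 g2" for g1 g2
    using hom[of 0 0 g1 g2] split[of "\<alpha> g1 g2" "g1 + g2"]
    unfolding coboundary_def pushforward_def pullback_def \<mu>_def by (simp add: algebra_simps)
  ultimately show ?thesis by blast
qed

lemma ext_hom_affine_map:
  fixes \<alpha> \<alpha>' :: "'g::ab_group_add \<Rightarrow> 'g \<Rightarrow> 'a::ab_group_add"
  assumes "add_hom \<psi>" "add_hom \<phi>"
    and "\<And>g1 g2. coboundary \<mu> g1 g2 = pushforward \<psi> \<alpha> g1 g2 - pullback \<phi> \<alpha>' g1 g2"
  shows "ext_hom \<alpha> \<alpha>' (\<lambda>(a, g). (\<psi> a + \<mu> g, \<phi> g))"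
  unfolding ext_hom_def
proof (intro allI)
  fix x y :: "'a \<times> 'g"
  obtain a1 g1 a2 g2 where xy: "x = (a1, g1)" "y = (a2, g2)" by fastforce
  have "\<psi> (a1 + a2 + \<alpha> g1 g2) = \<psi> a1 + \<psi> a2 + \<psi> (\<alpha> g1 g2)" "\<phi> (g1 + g2) = \<phi> g1 + \<phi> g2"
    using assms(1,2) unfolding add_hom_def by auto
  with assms(3)[of g1 g2]
  show "(\<lambda>(a, g). (\<psi> a + \<mu> g, \<phi> g)) (emul \<alpha> x y) =
        emul \<alpha>' ((\<lambda>(a, g). (\<psi> a + \<mu> g, \<phi> g)) x) ((\<lambda>(a, g). (\<psi> a + \<mu> g, \<phi> g)) y)"
    unfolding xy emul_def coboundary_def pushforward_def pullback_def by (simp add: algebra_simps)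
qed

lemma bij_affine_map:
  fixes \<psi> :: "'a \<Rightarrow> 'b::group_add" and \<phi> :: "'g \<Rightarrow> 'h"
  assumes "bij \<psi>" "bij \<phi>"
  shows "bij (\<lambda>(a, g). (\<psi> a + \<mu> g, \<phi> g))"
proof (rule bijI)
  show "inj (\<lambda>(a, g). (\<psi> a + \<mu> g, \<phi> g))"
  proof (rule injI)
    fix x y
    assume eq: "(\<lambda>(a, g). (\<psi> a + \<mu> g, \<phi> g)) x = (\<lambda>(a, g). (\<psi> a + \<mu> g, \<phi> g)) y"
    then have "snd x = snd y"
      using bij_is_inj[OF assms(2)] by (auto split: prod.splits dest: injD)
    with eq have "fst x = fst y"
      using bij_is_inj[OF assms(1)] by (auto split: prod.splits dest: injD)
    with \<open>snd x = snd y\<close> show "x = y" by (simp add: prod_eq_iff)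
  qed
  show "surj (\<lambda>(a, g). (\<psi> a + \<mu> g, \<phi> g))"
  proof (rule surjI)
    fix y :: "'b \<times> 'h"
    define g where "g = inv \<phi> (snd y)"
    have "\<phi> g = snd y" "\<psi> (inv \<psi> (fst y - \<mu> g)) = fst y - \<mu> g"
      unfolding g_def using assms by (simp_all add: bij_is_surj surj_f_inv_f)
    then show "(\<lambda>(a, g). (\<psi> a + \<mu> g, \<phi> g)) (inv \<psi> (fst y - \<mu> g), g) = y"
      by simp
  qed
qed

lemma bij_linear_part_if_bij_affine_map:
  fixes \<phi> :: "'g::zero \<Rightarrow> 'h" and \<psi> :: "'a \<Rightarrow> 'b::group_add"
  assumes "bij (\<lambda>(a, g). (\<psi> a + \<mu> g, \<phi> g))" "inj \<phi>"
  shows "bij \<psi>"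
proof (rule bijI)
  show "inj \<psi>"
  proof (rule injI)
    fix a b assume "\<psi> a = \<psi> b"
    then have "(\<lambda>(a, g). (\<psi> a + \<mu> g, \<phi> g)) (a, 0) = (\<lambda>(a, g). (\<psi> a + \<mu> g, \<phi> g)) (b, 0)"
      by simp
    then show "a = b" using bij_is_inj[OF assms(1)] unfolding inj_def by blast
  qed
  have "b \<in> range \<psi>" for b
  proof -
    have "(b + \<mu> 0, \<phi> 0) \<in> range (\<lambda>(a, g). (\<psi> a + \<mu> g, \<phi> g))"
      using bij_is_surj[OF assms(1)] by simp
    then obtain a g where "\<psi> a + \<mu> g = b + \<mu> 0" "\<phi> g = \<phi> 0" by auto
    moreover have "g = 0" using \<open>\<phi> g = \<phi> 0\<close> assms(2) by (auto dest: injD)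
    ultimately show ?thesis by (metis add_right_cancel rangeI)
  qed
  then show "surj \<psi>" by blast
qed

lemma lift_exists_iff:
  fixes \<alpha> \<alpha>' :: "'g::ab_group_add \<Rightarrow> 'g \<Rightarrow> 'a::ab_group_add"
  assumes "cocycle \<alpha>" "cocycle \<alpha>'" "add_hom \<phi>"
  shows "(\<exists>\<Phi>. ext_hom \<alpha> \<alpha>' \<Phi> \<and> is_lift \<phi> \<Phi>) \<longleftrightarrow>
    (\<exists>\<psi>. add_hom \<psi> \<and> (\<forall>g1 g2. \<psi> (eta \<alpha> g1 g2) = eta \<alpha>' (\<phi> g1) (\<phi> g2)) \<and>
       cohomologous (pullback \<phi> \<alpha>') (pushforward \<psi> \<alpha>))"
proof
  assume "\<exists>\<Phi>. ext_hom \<alpha> \<alpha>' \<Phi> \<and> is_lift \<phi> \<Phi>"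
  then obtain \<Phi> where \<Phi>: "ext_hom \<alpha> \<alpha>' \<Phi>" "is_lift \<phi> \<Phi>" by blast
  obtain \<psi> \<mu> where \<psi>: "add_hom \<psi>" and "\<And>a g. \<Phi> (a, g) = (\<psi> a + \<mu> g, \<phi> g)"
    and cob: "\<And>g1 g2. coboundary \<mu> g1 g2 = pushforward \<psi> \<alpha> g1 g2 - pullback \<phi> \<alpha>' g1 g2"
    using ext_hom_lift_affine_form[OF assms(1,2) \<Phi>] by blast
  have "\<forall>g1 g2. \<psi> (eta \<alpha> g1 g2) = eta \<alpha>' (\<phi> g1) (\<phi> g2)"
    using eta_compatible_if_coboundary[OF \<psi> cob] by blast
  moreover have "cohomologous (pullback \<phi> \<alpha>') (pushforward \<psi> \<alpha>)"
    unfolding cohomologous_iff_coboundary_diff using cob by blast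
  ultimately show "\<exists>\<psi>. add_hom \<psi> \<and> (\<forall>g1 g2. \<psi> (eta \<alpha> g1 g2) = eta \<alpha>' (\<phi> g1) (\<phi> g2)) \<and>
      cohomologous (pullback \<phi> \<alpha>') (pushforward \<psi> \<alpha>)"
    using \<psi> by blast
next
  assume "\<exists>\<psi>. add_hom \<psi> \<and> (\<forall>g1 g2. \<psi> (eta \<alpha> g1 g2) = eta \<alpha>' (\<phi> g1) (\<phi> g2)) \<and>
      cohomologous (pullback \<phi> \<alpha>') (pushforward \<psi> \<alpha>)"
  then obtain \<psi> where \<psi>: "add_hom \<psi>" and "cohomologous (pullback \<phi> \<alpha>') (pushforward \<psi> \<alpha>)"
    by blast
  then obtain \<mu>
    where cob: "\<And>g1 g2. coboundary \<mu> g1 g2 = pushforward \<psi> \<alpha> g1 g2 - pullback \<phi> \<alpha>' g1 g2"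
    unfolding cohomologous_iff_coboundary_diff by blast
  have "ext_hom \<alpha> \<alpha>' (\<lambda>(a, g). (\<psi> a + \<mu> g, \<phi> g))"
    by (rule ext_hom_affine_map[OF \<psi> assms(3) cob])
  moreover have "is_lift \<phi> (\<lambda>(a, g). (\<psi> a + \<mu> g, \<phi> g))"
    by (simp add: is_lift_def)
  ultimately show "\<exists>\<Phi>. ext_hom \<alpha> \<alpha>' \<Phi> \<and> is_lift \<phi> \<Phi>" by blast
qed

lemma bij_lift_exists_iff:
  fixes \<alpha> \<alpha>' :: "'g::ab_group_add \<Rightarrow> 'g \<Rightarrow> 'a::ab_group_add"
  assumes "cocycle \<alpha>" "cocycle \<alpha>'" "add_hom \<phi>" "bij \<phi>"
  shows "(\<exists>\<Phi>. ext_hom \<alpha> \<alpha>' \<Phi> \<and> bij \<Phi> \<and> is_lift \<phi> \<Phi>) \<longleftrightarrow>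
    (\<exists>\<psi>. add_hom \<psi> \<and> bij \<psi> \<and> (\<forall>g1 g2. \<psi> (eta \<alpha> g1 g2) = eta \<alpha>' (\<phi> g1) (\<phi> g2)) \<and>
       cohomologous (pullback \<phi> \<alpha>') (pushforward \<psi> \<alpha>))"
proof
  assume "\<exists>\<Phi>. ext_hom \<alpha> \<alpha>' \<Phi> \<and> bij \<Phi> \<and> is_lift \<phi> \<Phi>"
  then obtain \<Phi> where \<Phi>: "ext_hom \<alpha> \<alpha>' \<Phi>" "is_lift \<phi> \<Phi>" "bij \<Phi>" by blast
  obtain \<psi> \<mu> where \<psi>: "add_hom \<psi>" and form: "\<And>a g. \<Phi> (a, g) = (\<psi> a + \<mu> g, \<phi> g)"
    and cob: "\<And>g1 g2. coboundary \<mu> g1 g2 = pushforward \<psi> \<alpha> g1 g2 - pullback \<phi> \<alpha>' g1 g2"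
    using ext_hom_lift_affine_form[OF assms(1,2) \<Phi>(1,2)] by blast
  have "\<Phi> = (\<lambda>(a, g). (\<psi> a + \<mu> g, \<phi> g))"
    using form by auto
  with \<Phi>(3) have "bij \<psi>"
    using bij_linear_part_if_bij_affine_map bij_is_inj[OF assms(4)] by blast
  moreover have "\<forall>g1 g2. \<psi> (eta \<alpha> g1 g2) = eta \<alpha>' (\<phi> g1) (\<phi> g2)"
    using eta_compatible_if_coboundary[OF \<psi> cob] by blast
  moreover have "cohomologous (pullback \<phi> \<alpha>') (pushforward \<psi> \<alpha>)"
    unfolding cohomologous_iff_coboundary_diff using cob by blast
  ultimately show "\<exists>\<psi>. add_hom \<psi> \<and> bij \<psi> \<and> (\<forall>g1 g2. \<psi> (eta \<alpha> g1 g2) = eta \<alpha>' (\<phi> g1) (\<phi> g2)) \<and>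
      cohomologous (pullback \<phi> \<alpha>') (pushforward \<psi> \<alpha>)"
    using \<psi> by blast
next
  assume "\<exists>\<psi>. add_hom \<psi> \<and> bij \<psi> \<and> (\<forall>g1 g2. \<psi> (eta \<alpha> g1 g2) = eta \<alpha>' (\<phi> g1) (\<phi> g2)) \<and>
      cohomologous (pullback \<phi> \<alpha>') (pushforward \<psi> \<alpha>)"
  then obtain \<psi> where \<psi>: "add_hom \<psi>" "bij \<psi>"
    and "cohomologous (pullback \<phi> \<alpha>') (pushforward \<psi> \<alpha>)"
    by blast
  then obtain \<mu>
    where cob: "\<And>g1 g2. coboundary \<mu> g1 g2 = pushforward \<psi> \<alpha> g1 g2 - pullback \<phi> \<alpha>' g1 g2"
    unfolding cohomologous_iff_coboundary_diff by blast
  have "ext_hom \<alpha> \<alpha>' (\<lambda>(a, g). (\<psi> a + \<mu> g, \<phi> g))"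
    by (rule ext_hom_affine_map[OF \<psi>(1) assms(3) cob])
  moreover have "bij (\<lambda>(a, g). (\<psi> a + \<mu> g, \<phi> g))"
    by (rule bij_affine_map[OF \<psi>(2) assms(4)])
  moreover have "is_lift \<phi> (\<lambda>(a, g). (\<psi> a + \<mu> g, \<phi> g))"
    by (simp add: is_lift_def)
  ultimately show "\<exists>\<Phi>. ext_hom \<alpha> \<alpha>' \<Phi> \<and> bij \<Phi> \<and> is_lift \<phi> \<Phi>" by blast
qed

lemma lift_affine_form_unique:
  fixes \<alpha> \<alpha>' :: "'g::ab_group_add \<Rightarrow> 'g \<Rightarrow> 'a::ab_group_add"
  assumes "cocycle \<alpha>" "cocycle \<alpha>'" "gen_subgroup (range (\<lambda>(g1, g2). eta \<alpha> g1 g2)) = UNIV"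
    and "add_hom \<psi>" "\<And>g1 g2. \<psi> (eta \<alpha> g1 g2) = eta \<alpha>' (\<phi> g1) (\<phi> g2)"
    and "ext_hom \<alpha> \<alpha>' \<Phi>" "is_lift \<phi> \<Phi>"
  shows "\<exists>!\<mu>. (\<forall>a g. \<Phi> (a, g) = (\<psi> a + \<mu> g, \<phi> g)) \<and>
    (\<forall>g1 g2. coboundary \<mu> g1 g2 = pushforward \<psi> \<alpha> g1 g2 - pullback \<phi> \<alpha>' g1 g2)"
proof -
  obtain \<psi>' \<mu> where \<psi>': "add_hom \<psi>'" and form: "\<And>a g. \<Phi> (a, g) = (\<psi>' a + \<mu> g, \<phi> g)"
    and cob: "\<And>g1 g2. coboundary \<mu> g1 g2 = pushforward \<psi>' \<alpha> g1 g2 - pullback \<phi> \<alpha>' g1 g2"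
    using ext_hom_lift_affine_form[OF assms(1,2,6,7)] by blast
  have "\<psi>' = \<psi>"
  proof (rule add_hom_eqI_generators[OF \<psi>' assms(4,3)])
    fix s assume "s \<in> range (\<lambda>(g1, g2). eta \<alpha> g1 g2)"
    then show "\<psi>' s = \<psi> s"
      using eta_compatible_if_coboundary[OF \<psi>' cob] assms(5) by auto
  qed
  show ?thesis
  proof (rule ex1I[of _ \<mu>])
    show "(\<forall>a g. \<Phi> (a, g) = (\<psi> a + \<mu> g, \<phi> g)) \<and>
      (\<forall>g1 g2. coboundary \<mu> g1 g2 = pushforward \<psi> \<alpha> g1 g2 - pullback \<phi> \<alpha>' g1 g2)"
      using form cob \<open>\<psi>' = \<psi>\<close> by simp
  next
    fix \<mu>' assume "(\<forall>a g. \<Phi> (a, g) = (\<psi> a + \<mu>' g, \<phi> g)) \<and>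
      (\<forall>g1 g2. coboundary \<mu>' g1 g2 = pushforward \<psi> \<alpha> g1 g2 - pullback \<phi> \<alpha>' g1 g2)"
    then have "\<mu>' g = \<mu> g" for g
      using form[of 0 g] add_hom_zero[OF assms(4)] \<open>\<psi>' = \<psi>\<close> by simp
    then show "\<mu>' = \<mu>" by blast
  qed
qed

theorem proposition1p1:
  fixes p :: nat
    and \<alpha> \<alpha>' :: "'g::{ab_group_add,finite} \<Rightarrow> 'g \<Rightarrow> 'a::{ab_group_add,finite}"
  assumes "prime p"
    and "is_p_group p (UNIV :: 'g set)"
    and "is_p_group p (UNIV :: 'a set)"
    and "cocycle \<alpha>" and "cocycle \<alpha>'"
    and "gen_subgroup (range (\<lambda>(g1, g2). eta \<alpha> g1 g2)) = UNIV"
    and "gen_subgroup (range (\<lambda>(g1, g2). eta \<alpha>' g1 g2)) = UNIV"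
  shows
    "(\<forall>\<phi>::'g \<Rightarrow> 'g. add_hom \<phi> \<longrightarrow>
       ((\<exists>\<Phi>. ext_hom \<alpha> \<alpha>' \<Phi> \<and> is_lift \<phi> \<Phi>) \<longleftrightarrow>
        (\<exists>\<psi>::'a \<Rightarrow> 'a. add_hom \<psi> \<and>
           (\<forall>g1 g2. \<psi> (eta \<alpha> g1 g2) = eta \<alpha>' (\<phi> g1) (\<phi> g2)) \<and>
           cohomologous (pullback \<phi> \<alpha>') (pushforward \<psi> \<alpha>))))
   \<and> (\<forall>(\<phi>::'g \<Rightarrow> 'g) (\<psi>::'a \<Rightarrow> 'a). add_hom \<phi> \<and> add_hom \<psi> \<and>
        (\<forall>g1 g2. \<psi> (eta \<alpha> g1 g2) = eta \<alpha>' (\<phi> g1) (\<phi> g2)) \<and>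
        cohomologous (pullback \<phi> \<alpha>') (pushforward \<psi> \<alpha>) \<longrightarrow>
        (\<forall>\<Phi>. ext_hom \<alpha> \<alpha>' \<Phi> \<and> is_lift \<phi> \<Phi> \<longrightarrow>
           (\<exists>!\<mu>::'g \<Rightarrow> 'a. (\<forall>a g. \<Phi> (a, g) = (\<psi> a + \<mu> g, \<phi> g)) \<and>
              (\<forall>g1 g2. coboundary \<mu> g1 g2 = pushforward \<psi> \<alpha> g1 g2 - pullback \<phi> \<alpha>' g1 g2))))
   \<and> (\<forall>\<phi>::'g \<Rightarrow> 'g. add_hom \<phi> \<and> bij \<phi> \<longrightarrow>
       ((\<exists>\<Phi>. ext_hom \<alpha> \<alpha>' \<Phi> \<and> bij \<Phi> \<and> is_lift \<phi> \<Phi>) \<longleftrightarrow>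
        (\<exists>\<psi>::'a \<Rightarrow> 'a. add_hom \<psi> \<and> bij \<psi> \<and>
           (\<forall>g1 g2. \<psi> (eta \<alpha> g1 g2) = eta \<alpha>' (\<phi> g1) (\<phi> g2)) \<and>
           cohomologous (pullback \<phi> \<alpha>') (pushforward \<psi> \<alpha>))))"
  by (simp add: lift_exists_iff[OF assms(4,5)] bij_lift_exists_iff[OF assms(4,5)]
      lift_affine_form_unique[OF assms(4,5,6)])

end
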